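(* Let $m\ge 1$ and $d_k\ge 1$ be integers, let $u\in\mathbb{R}^m$ with $\|u\|=1$, and let $g_1,\ldots,g_{d_k}\in\mathbb{R}^m$ be vectors such that no $g_i$ is colinear with $u$. Consider the optimization problem $$\min_{V_1,\ldots,V_{d_k}\in\mathbb{R}^m}\ \sum_{i=1}^{d_k} V_i^T g_i \quad\text{subject to}\quad u^T\Big(\sum_{j=1}^{d_k} V_j\Big)=2-d_k,\qquad \|V_i\|=1\ \ (i=1,\ldots,d_k).$$ Then at an optimum $(V_1^*,\ldots,V_{d_k}^* )$ of this problem, every vector $V_i^*$ lies in the (two-dimensional) linear subspace of $\mathbb{R}^m$ spanned by $g_i$ and $u$.
   Context: This problem is the block subproblem arising in a low-rank (Burer–Monteiro) SDP relaxation of a pairwise discrete graphical model: the $V_i$ are the rows of the low-rank factor associated with the $d_k$ values of a discrete variable $x_k$, $u$ is the fixed last row $V_{d+1}$ of the factor, and the $g_i$ are fixed vectors determined by the other rows. $\|\cdot\|$ is the Euclidean norm. *)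

theory Defs
  imports "HOL-Analysis.Analysis"
begin

definition block_feasible :: "'a::euclidean_space \<Rightarrow> nat \<Rightarrow> (nat \<Rightarrow> 'a) \<Rightarrow> bool" where
  "block_feasible u d V \<longleftrightarrow>
     u \<bullet> (\<Sum>j\<in>{1..d}. V j) = 2 - real d \<and> (\<forall>i\<in>{1..d}. norm (V i) = 1)"

definition block_objective :: "nat \<Rightarrow> (nat \<Rightarrow> 'a::euclidean_space) \<Rightarrow> (nat \<Rightarrow> 'a) \<Rightarrow> real" where
  "block_objective d g V = (\<Sum>i\<in>{1..d}. V i \<bullet> g i)"

end

(* Fixing every block but V i, optimality says that V i minimises x \<bullet> g i over the circle of
   unit vectors x with u \<bullet> x = u \<bullet> V i.  Split x and g i orthogonally along u: the u-component
   of x is fixed on the circle, so only the orthogonal part w of x, which has fixed length, can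
   vary, and it is paired with the orthogonal part h of g i, nonzero since g i is not colinear
   with u.  By the equality case of Cauchy-Schwarz the minimum forces w to be a negative multiple
   of h, hence V i lies in span {u, h} = span {g i, u}. *)
theory Submission
  imports Defs
begin

lemma inner_le_neg_norm_mult_imp_eq_scaleR:
  fixes w h :: "'a::real_inner"
  assumes "h \<noteq> 0" and "w \<bullet> h \<le> - (norm w * norm h)"
  shows "w = (- (norm w / norm h)) *\<^sub>R h"
proof -
  have "(- w) \<bullet> h = norm (- w) * norm h"
    using assms(2) norm_cauchy_schwarz[of "- w" h] by simp
  then have "norm (- w) *\<^sub>R h = norm h *\<^sub>R (- w)"
    by (simp only: norm_cauchy_schwarz_eq)
  then have "norm h *\<^sub>R w = norm h *\<^sub>R ((- (norm w / norm h)) *\<^sub>R h)"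
    using assms(1) by simp
  then show ?thesis
    using assms(1) by (metis scaleR_cancel_left norm_eq_zero)
qed

lemma sphere_slice_minimizer_in_span:
  fixes u g v :: "'a::euclidean_space"
  assumes not_colinear: "\<not> (\<exists>c::real. g = c *\<^sub>R u)"
    and minimal: "\<And>x. norm x = norm v \<Longrightarrow> u \<bullet> x = u \<bullet> v \<Longrightarrow> v \<bullet> g \<le> x \<bullet> g"
  shows "v \<in> span {g, u}"
proof -
  (* For u = 0 the division by u \<bullet> u = 0 makes a = b = 0, and the argument still applies. *)
  define a where "a = (u \<bullet> v) / (u \<bullet> u)"
  define w where "w = v - a *\<^sub>R u"
  define b where "b = (u \<bullet> g) / (u \<bullet> u)"
  define h where "h = g - b *\<^sub>R u"
  have uw: "u \<bullet> w = 0" and uh: "u \<bullet> h = 0"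
    unfolding w_def h_def a_def b_def by (fact vector_sub_project_orthogonal)+
  have v_decomp: "v = a *\<^sub>R u + w" and g_decomp: "g = h + b *\<^sub>R u"
    unfolding w_def h_def by simp_all
  have "h \<noteq> 0"
    using not_colinear unfolding h_def by (metis eq_iff_diff_eq_0)
  then have norm_h: "norm h > 0" by simp
  define x where "x = a *\<^sub>R u + (- (norm w / norm h)) *\<^sub>R h"
  have "(norm x)\<^sup>2 = (norm (a *\<^sub>R u))\<^sup>2 + (norm ((- (norm w / norm h)) *\<^sub>R h))\<^sup>2"
    unfolding x_def using uh by (intro norm_add_Pythagorean) (simp add: orthogonal_def)
  also have "\<dots> = (norm (a *\<^sub>R u))\<^sup>2 + (norm w)\<^sup>2"
    using norm_h by simp
  also have "\<dots> = (norm v)\<^sup>2"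
    unfolding v_decomp using uw by (intro norm_add_Pythagorean [symmetric]) (simp add: orthogonal_def)
  finally have "norm x = norm v" by simp
  moreover have "u \<bullet> x = u \<bullet> v"
    unfolding x_def v_decomp using uw uh by (simp add: inner_add_right inner_diff_right)
  ultimately have "v \<bullet> g \<le> x \<bullet> g" by (rule minimal)
  moreover have "v \<bullet> g = w \<bullet> h + a * b * (u \<bullet> u)"
    unfolding v_decomp g_decomp using uw uh
    by (simp add: inner_add_left inner_add_right inner_commute)
  moreover have "x \<bullet> g = - (norm w * norm h) + a * b * (u \<bullet> u)"
    unfolding x_def g_decomp using uh norm_h
    by (simp add: inner_add_left inner_add_right inner_diff_left inner_diff_right inner_commute
      dot_square_norm power2_eq_square)
  ultimately have "w \<bullet> h \<le> - (norm w * norm h)" by simp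
  then have "w = (- (norm w / norm h)) *\<^sub>R h"
    by (rule inner_le_neg_norm_mult_imp_eq_scaleR [OF \<open>h \<noteq> 0\<close>])
  moreover have "h \<in> span {g, u}"
    unfolding h_def by (intro span_diff span_mul span_base) auto
  ultimately have "w \<in> span {g, u}"
    by (metis span_mul)
  moreover have "a *\<^sub>R u \<in> span {g, u}"
    by (intro span_mul span_base) auto
  ultimately show ?thesis
    unfolding v_decomp by (intro span_add)
qed

lemma sum_fun_upd_at:
  fixes F :: "'b \<Rightarrow> 'a \<Rightarrow> 'c::ab_group_add"
  assumes "finite A" and "i \<in> A"
  shows "(\<Sum>j\<in>A. F ((f(i := y)) j) j) = (\<Sum>j\<in>A. F (f j) j) + (F y i - F (f i) i)"
proof -
  have "(\<Sum>j\<in>A - {i}. F ((f(i := y)) j) j) = (\<Sum>j\<in>A - {i}. F (f j) j)"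
    by (intro sum.cong) auto
  then show ?thesis
    using sum.remove [OF assms, of "\<lambda>j. F ((f(i := y)) j) j"]
      sum.remove [OF assms, of "\<lambda>j. F (f j) j"]
    by simp
qed

lemma block_feasible_fun_upd:
  assumes "block_feasible u d V" and "i \<in> {1..d}"
    and "norm x = 1" and "u \<bullet> x = u \<bullet> V i"
  shows "block_feasible u d (V(i := x))"
  using assms sum_fun_upd_at [of "{1..d}" i "\<lambda>v j. v" V x]
  by (simp add: block_feasible_def inner_add_right inner_diff_right)

lemma block_objective_fun_upd:
  assumes "i \<in> {1..d}"
  shows "block_objective d g (V(i := x)) = block_objective d g V + (x \<bullet> g i - V i \<bullet> g i)"
  using assms sum_fun_upd_at [of "{1..d}" i "\<lambda>v j. v \<bullet> g j" V x]
  by (simp add: block_objective_def)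

lemma block_optimal_imp_slice_minimal:
  assumes feasible: "block_feasible u d V"
    and optimal: "\<forall>W. block_feasible u d W \<longrightarrow> block_objective d g V \<le> block_objective d g W"
    and "i \<in> {1..d}" and "norm x = norm (V i)" and "u \<bullet> x = u \<bullet> V i"
  shows "V i \<bullet> g i \<le> x \<bullet> g i"
proof -
  have "norm x = 1"
    using assms(3,4) feasible by (simp add: block_feasible_def)
  then have "block_feasible u d (V(i := x))"
    using assms(3,5) feasible by (intro block_feasible_fun_upd)
  then show ?thesis
    using optimal block_objective_fun_upd [OF assms(3), of g V x] by fastforce
qed

theorem theorem2:
  fixes u :: "'a::euclidean_space" and g V :: "nat \<Rightarrow> 'a" and d :: nat
  assumes "d \<ge> 1"
    and "norm u = 1"
    and "\<forall>i\<in>{1..d}. \<not> (\<exists>c::real. g i = c *\<^sub>R u)"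
    and "block_feasible u d V"
    and "\<forall>W. block_feasible u d W \<longrightarrow> block_objective d g V \<le> block_objective d g W"
  shows "\<forall>i\<in>{1..d}. V i \<in> span {g i, u}"
  using assms(3-5) by (blast intro: sphere_slice_minimizer_in_span block_optimal_imp_slice_minimal)

end
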